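(* If $\mathcal{X}$ is infinite, there is no consistent hypothesis test for condition $\mathrm{FS}$: for every sequence of (possibly randomized) decision functions $\hat t_n:\mathcal{X}^n\to\{0,1\}$ there exists a process $\mathbb{X}$ on $\mathcal{X}$ such that $\hat t_n(X_1,\dots,X_n)$ does not converge in probability to $\mathbb{1}_{\mathbb{X}\in\mathrm{FS}}$.
   Context: $\mathrm{FS}$ is the set of stochastic processes $\mathbb{X}=(X_t)_{t\ge1}$ on $\mathcal{X}$ that take only finitely many distinct values almost surely. A hypothesis test is a sequence of possibly random decision functions $\hat t_n$ applied to $(X_1,\dots,X_n)$; it is consistent for a class $\mathcal{C}$ of processes if for every process $\mathbb{X}$, $\hat t_n(X_1,\dots,X_n)\to\mathbb{1}_{\mathbb{X}\in\mathcal{C}}$ in probability. *)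

theory Defs
  imports "HOL-Probability.Probability"
begin

text \<open>The canonical sample space of a process on 'a: sequences indexed by time (time 0 here
  corresponds to time 1 in the paper), with the product Borel sigma-algebra.\<close>
abbreviation seq_space :: "(nat \<Rightarrow> 'a::topological_space) measure" where
  "seq_space \<equiv> PiM UNIV (\<lambda>_. borel)"

definition FS :: "(nat \<Rightarrow> 'a) measure \<Rightarrow> bool" where
  "FS \<mu> \<longleftrightarrow> (AE x in \<mu>. finite (range x))"

definition conv_in_prob :: "'b measure \<Rightarrow> (nat \<Rightarrow> 'b \<Rightarrow> real) \<Rightarrow> real \<Rightarrow> bool" where
  "conv_in_prob P Y c \<longleftrightarrow>
     (\<forall>e>0. (\<lambda>n. measure P {\<omega> \<in> space P. \<bar>Y n \<omega> - c\<bar> > e}) \<longlonglongrightarrow> 0)"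

end

theory Submission
  imports Defs
begin

text \<open>Feed the test deterministic paths, i.e.\ processes with law \<open>return seq_space x\<close>.
  Consistency forces the acceptance probability of \<open>x\<close> to tend to 1 if \<open>x\<close> takes finitely
  many values and to 0 otherwise. Now build a path diagonally: follow a finitely-valued path
  until the test accepts it with probability above 1/2, then switch to a fresh value, and repeat.
  Since the decision at time \<open>n\<close> only sees the first \<open>n\<close> values, the limit path is
  accepted with probability above 1/2 infinitely often, although it takes infinitely many values.\<close>

lemma space_seq_space: "space (seq_space :: (nat \<Rightarrow> 'a::topological_space) measure) = UNIV"
  by (simp add: space_PiM)

lemma singleton_in_sets_seq_space: "{x} \<in> sets (seq_space :: (nat \<Rightarrow> 'a::t1_space) measure)"
proof -
  have "{x} = (\<Inter>i. {y \<in> space (seq_space :: (nat \<Rightarrow> 'a) measure). y i \<in> {x i}})"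
    by (auto simp: space_seq_space)
  also have "\<dots> \<in> sets (seq_space :: (nat \<Rightarrow> 'a) measure)"
    by (intro sets.countable_INT' measurable_sets[OF measurable_component_singleton])
      (auto intro: borel_closed)
  finally show ?thesis .
qed

lemma FS_return_iff: "FS (return seq_space x) \<longleftrightarrow> finite (range (x :: nat \<Rightarrow> 'a::t1_space))"
proof
  assume "FS (return seq_space x)"
  then obtain N where N: "{y \<in> space (return seq_space x). infinite (range y)} \<subseteq> N"
    "N \<in> null_sets (return seq_space x)"
    unfolding FS_def by (elim AE_E) blast
  show "finite (range x)"
  proof (rule ccontr)
    assume "infinite (range x)"
    then have "x \<in> N" using N(1) by (auto simp: space_seq_space)
    then show False using N(2) by (auto simp: null_sets_def)
  qed
next
  assume "finite (range x)"
  then show "FS (return seq_space x)"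
    unfolding FS_def
    by (intro AE_I[where N="space seq_space - {x}"])
      (use sets.compl_sets[OF singleton_in_sets_seq_space[of x]] in \<open>auto simp: space_seq_space\<close>)
qed

lemma emeasure_return_pair_measure:
  assumes "sigma_finite_measure N" "x \<in> space M" "A \<in> sets (M \<Otimes>\<^sub>M N)"
  shows "emeasure (return M x \<Otimes>\<^sub>M N) A = emeasure N (Pair x -` A)"
proof -
  interpret N: sigma_finite_measure N by fact
  have A: "A \<in> sets (return M x \<Otimes>\<^sub>M N)"
    using assms(3) by (simp add: sets_pair_measure_cong[OF sets_return])
  show ?thesis
    using N.measurable_emeasure_Pair[OF A] assms(2)
    by (simp add: N.emeasure_pair_measure_alt[OF A] nn_integral_return)
qed

lemma conv_in_prob_return_pair_iff:
  fixes f :: "nat \<Rightarrow> 'a \<times> 'b \<Rightarrow> real"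
  assumes "sigma_finite_measure N" "x \<in> space M" "\<And>n. f n \<in> borel_measurable (M \<Otimes>\<^sub>M N)"
  shows "conv_in_prob (return M x \<Otimes>\<^sub>M N) f c \<longleftrightarrow> conv_in_prob N (\<lambda>n u. f n (x, u)) c"
proof -
  have "measure (return M x \<Otimes>\<^sub>M N) {\<omega> \<in> space (return M x \<Otimes>\<^sub>M N). e < \<bar>f n \<omega> - c\<bar>}
      = measure N {u \<in> space N. e < \<bar>f n (x, u) - c\<bar>}" for n e
  proof -
    let ?A = "{\<omega> \<in> space (M \<Otimes>\<^sub>M N). e < \<bar>f n \<omega> - c\<bar>}"
    have "?A \<in> sets (M \<Otimes>\<^sub>M N)"
      using assms(3) by measurable
    moreover have "Pair x -` ?A = {u \<in> space N. e < \<bar>f n (x, u) - c\<bar>}"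
      using assms(2) by (auto simp: space_pair_measure)
    ultimately show ?thesis
      using emeasure_return_pair_measure[OF assms(1,2)]
      by (simp add: measure_def space_pair_measure)
  qed
  then show ?thesis
    by (simp add: conv_in_prob_def)
qed

lemma conv_in_prob_zero_one_valued:
  assumes "prob_space N" "\<And>n. g n \<in> borel_measurable N" "\<And>n u. g n u \<in> {0, 1}" "c \<in> {0, 1}"
    and "conv_in_prob N g c"
  shows "(\<lambda>n. measure N {u \<in> space N. g n u = 1}) \<longlonglongrightarrow> c"
proof -
  interpret N: prob_space N by fact
  define B where "B n = {u \<in> space N. g n u = 1}" for n
  have B: "B n \<in> sets N" for n
    unfolding B_def using assms(2) by measurable
  have "(\<lambda>n. measure N {u \<in> space N. 1/2 < \<bar>g n u - c\<bar>}) \<longlonglongrightarrow> 0"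
    using assms(5) unfolding conv_in_prob_def by (elim allE[of _ "1/2"]) simp
  moreover have "{u \<in> space N. 1/2 < \<bar>g n u - c\<bar>} = (if c = 0 then B n else space N - B n)" for n
  proof -
    have "1/2 < \<bar>g n u - c\<bar> \<longleftrightarrow> g n u \<noteq> c" for u
      using assms(3)[of n u] assms(4) by auto
    then show ?thesis
      using assms(3)[of n] assms(4) by (auto simp: B_def)
  qed
  ultimately show ?thesis
    using assms(4) N.prob_compl[OF B] by (auto simp: B_def LIMSEQ_iff)
qed

primrec diagonal_stage ::
  "((nat \<Rightarrow> 'a) \<Rightarrow> nat \<Rightarrow> nat) \<Rightarrow> (nat \<Rightarrow> 'a) \<Rightarrow> nat \<Rightarrow> (nat \<Rightarrow> 'a) \<times> nat" where
  "diagonal_stage pick a 0 = (\<lambda>_. a 0, pick (\<lambda>_. a 0) 0)"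
| "diagonal_stage pick a (Suc k) =
    (let (x, n) = diagonal_stage pick a k;
         x' = (\<lambda>i. if i < n then x i else a (Suc k))
     in (x', pick x' (Suc n)))"

lemma exists_common_extension_of_prefixes:
  fixes X :: "nat \<Rightarrow> nat \<Rightarrow> 'a" and N :: "nat \<Rightarrow> nat"
  assumes "mono N" "\<And>k. k \<le> N k" "\<And>k i. i < N k \<Longrightarrow> X (Suc k) i = X k i"
  shows "\<exists>y. \<forall>k i. i < N k \<longrightarrow> y i = X k i"
proof (intro exI allI impI)
  have agree: "X k' i = X k i" if "k \<le> k'" "i < N k" for k k' i
    using that(1)
  proof (induction k' rule: dec_induct)
    case (step m)
    then show ?case
      using assms(3)[of i m] that(2) monoD[OF assms(1) step(1)] by simp
  qed simp
  fix k i
  assume "i < N k"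
  moreover have "i < N (Suc i)"
    using assms(2)[of "Suc i"] by simp
  ultimately show "X (Suc i) i = X k i"
    using agree[of "Suc i" "max k (Suc i)" i] agree[of k "max k (Suc i)" i] by simp
qed

lemma causal_frequently_on_finite_range_extends:
  fixes P :: "nat \<Rightarrow> (nat \<Rightarrow> 'a) \<Rightarrow> bool"
  assumes "infinite (UNIV :: 'a set)"
    and causal: "\<And>n x y. (\<And>i. i < n \<Longrightarrow> x i = y i) \<Longrightarrow> P n x \<longleftrightarrow> P n y"
    and freq: "\<And>x. finite (range x) \<Longrightarrow> \<exists>\<^sub>F n in sequentially. P n x"
  shows "\<exists>y. infinite (range y) \<and> (\<exists>\<^sub>F n in sequentially. P n y)"
proof -
  obtain a :: "nat \<Rightarrow> 'a" where "inj a"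
    using infinite_countable_subset[OF assms(1)] by blast
  define pick where "pick x m = (SOME n. m \<le> n \<and> P n x)" for x :: "nat \<Rightarrow> 'a" and m
  have pick: "m \<le> pick x m \<and> P (pick x m) x" if "finite (range x)" for x m
    unfolding pick_def
    by (rule someI_ex) (use freq[OF that] in \<open>auto simp: frequently_sequentially\<close>)
  define X where "X k = fst (diagonal_stage pick a k)" for k
  define N where "N k = snd (diagonal_stage pick a k)" for k
  have X_0: "X 0 = (\<lambda>_. a 0)" and N_0: "N 0 = pick (X 0) 0"
    unfolding X_def N_def by simp_all
  have X_Suc: "X (Suc k) = (\<lambda>i. if i < N k then X k i else a (Suc k))"
    and N_Suc: "N (Suc k) = pick (X (Suc k)) (Suc (N k))" for k
    unfolding X_def N_def by (simp_all add: split_beta Let_def)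
  have "range (X k) \<subseteq> a ` {..k}" for k
  proof (induction k)
    case (Suc k)
    have "range (X (Suc k)) \<subseteq> range (X k) \<union> {a (Suc k)}"
      by (auto simp: X_Suc)
    also have "\<dots> \<subseteq> a ` {..Suc k}"
      using Suc.IH by (auto simp: atMost_Suc)
    finally show ?case .
  qed (auto simp: X_0)
  then have fin: "finite (range (X k))" for k
    by (meson finite_atMost finite_imageI finite_subset)
  have N_less: "N k < N (Suc k)" for k
    using pick[OF fin[of "Suc k"], of "Suc (N k)"] by (simp add: N_Suc)
  have P_stage: "P (N k) (X k)" for k
    using pick[OF fin[of k]] by (cases k) (simp_all add: X_0 N_0 N_Suc)
  have "strict_mono N"
    using N_less by (rule strict_monoI_Suc)
  then obtain y where y: "\<And>k i. i < N k \<Longrightarrow> y i = X k i"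
    using exists_common_extension_of_prefixes[of N X]
    by (auto simp: strict_mono_mono strict_mono_imp_increasing X_Suc)
  have "y (N k) = a (Suc k)" for k
    using y[of "N k" "Suc k"] N_less[of k] by (simp add: X_Suc)
  then have "range (a \<circ> Suc) \<subseteq> range y"
    by (metis comp_apply image_subset_iff rangeI)
  moreover have "infinite (range (a \<circ> Suc))"
    using \<open>inj a\<close> by (intro range_inj_infinite inj_compose inj_Suc) auto
  ultimately have "infinite (range y)"
    using finite_subset by blast
  moreover have "P (N k) y" for k
    using P_stage[of k] causal[of "N k" y "X k"] y[of _ k] by blast
  then have "\<exists>\<^sub>F n in sequentially. P n y"
    using strict_mono_imp_increasing[OF \<open>strict_mono N\<close>]
    by (auto simp: frequently_sequentially)
  ultimately show ?thesis by blast
qed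

definition acceptance_prob ::
    "(nat \<Rightarrow> (nat \<Rightarrow> 'a) \<Rightarrow> real \<Rightarrow> real) \<Rightarrow> nat \<Rightarrow> (nat \<Rightarrow> 'a) \<Rightarrow> real" where
  "acceptance_prob t n x =
     measure (uniform_measure lborel {0..1}) {u \<in> space (uniform_measure lborel {0..1}). t n x u = 1}"

lemma acceptance_prob_tendsto:
  fixes t :: "nat \<Rightarrow> (nat \<Rightarrow> 'a::topological_space) \<Rightarrow> real \<Rightarrow> real"
  assumes t_meas: "\<And>n. (\<lambda>(x, u). t n x u) \<in> borel_measurable (seq_space \<Otimes>\<^sub>M (borel :: real measure))"
    and "\<And>n x u. t n x u \<in> {0, 1}" "c \<in> {0, 1}"
    and "conv_in_prob (return seq_space x \<Otimes>\<^sub>M uniform_measure lborel {0..1})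
           (\<lambda>n (x, u). t n x u) c"
  shows "(\<lambda>n. acceptance_prob t n x) \<longlonglongrightarrow> c"
proof -
  let ?U = "uniform_measure lborel {0..1::real}"
  have U: "prob_space ?U"
    by (intro prob_space_uniform_measure) auto
  have sets_eq: "sets (seq_space \<Otimes>\<^sub>M ?U) = sets (seq_space \<Otimes>\<^sub>M (borel :: real measure))"
    by (rule sets_pair_measure_cong[OF refl]) simp
  have t_meas': "(\<lambda>(x, u). t n x u) \<in> borel_measurable (seq_space \<Otimes>\<^sub>M ?U)" for n
    unfolding measurable_cong_sets[OF sets_eq refl] by (rule t_meas)
  have "conv_in_prob ?U (\<lambda>n u. t n x u) c"
    using assms(4) conv_in_prob_return_pair_iff[OF prob_space_imp_sigma_finite[OF U] _ t_meas', of x]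
    by (simp add: space_seq_space)
  then show ?thesis
    unfolding acceptance_prob_def using measurable_Pair2[OF t_meas', of x] assms(2,3)
    by (intro conv_in_prob_zero_one_valued[OF U]) (auto simp: space_seq_space)
qed

theorem proposition4:
  fixes t :: "nat \<Rightarrow> (nat \<Rightarrow> 'a::{metric_space, second_countable_topology}) \<Rightarrow> real \<Rightarrow> real"
  assumes "infinite (UNIV :: 'a set)"
    and "\<forall>n. (\<lambda>(x, u). t n x u) \<in> borel_measurable (seq_space \<Otimes>\<^sub>M (borel :: real measure))"
    and "\<forall>n x u. t n x u \<in> {0, 1}"
    and "\<forall>n x y u. (\<forall>i<n. x i = y i) \<longrightarrow> t n x u = t n y u"
  shows "\<exists>\<mu> :: (nat \<Rightarrow> 'a) measure. prob_space \<mu> \<and> sets \<mu> = sets seq_space \<and>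
           \<not> conv_in_prob (\<mu> \<Otimes>\<^sub>M uniform_measure lborel {0..1::real})
               (\<lambda>n (x, u). t n x u) (if FS \<mu> then 1 else 0)"
proof (rule ccontr)
  assume "\<not> ?thesis"
  then have consistent: "\<And>\<mu>. prob_space \<mu> \<Longrightarrow> sets \<mu> = sets seq_space \<Longrightarrow>
      conv_in_prob (\<mu> \<Otimes>\<^sub>M uniform_measure lborel {0..1}) (\<lambda>n (x, u). t n x u)
        (if FS \<mu> then 1 else 0)"
    by blast
  have lim: "(\<lambda>n. acceptance_prob t n x) \<longlonglongrightarrow> (if finite (range x) then 1 else 0)" for x
    using consistent[OF prob_space_return sets_return, of x] assms(2,3)
    by (intro acceptance_prob_tendsto) (auto simp: FS_return_iff space_seq_space)
  have "\<exists>y. infinite (range y) \<and> (\<exists>\<^sub>F n in sequentially. 1/2 < acceptance_prob t n y)"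
  proof (rule causal_frequently_on_finite_range_extends[OF assms(1)])
    show "1/2 < acceptance_prob t n x \<longleftrightarrow> 1/2 < acceptance_prob t n y"
      if "\<And>i. i < n \<Longrightarrow> x i = y i" for n x y
    proof -
      have "t n x = t n y"
        using assms(4) that by auto
      then show ?thesis
        by (simp add: acceptance_prob_def)
    qed
    show "\<exists>\<^sub>F n in sequentially. 1/2 < acceptance_prob t n x" if "finite (range x)" for x
      using order_tendstoD(1)[OF lim[of x], of "1/2"] that by (intro eventually_frequently) simp_all
  qed
  then obtain y where "infinite (range y)"
    and accept: "\<exists>\<^sub>F n in sequentially. 1/2 < acceptance_prob t n y"
    by blast
  then have "eventually (\<lambda>n. acceptance_prob t n y < 1/2) sequentially"
    using order_tendstoD(2)[OF lim[of y], of "1/2"] by simp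
  from frequently_eventually_frequently[OF accept this]
  have "\<exists>\<^sub>F n in sequentially. False"
    by (rule frequently_elim1) linarith
  then show False
    by simp
qed

end
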